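(* Let $a\neq0$ and $m\neq0$ be real constants. Let $(M_1,g_1)$ be the Gödel spacetime, i.e. $\mathbb{R}^4$ with coordinates $(x,y,z,t)$ and metric $g_1=dt^2+\tfrac12e^{2mx}dy^2-dx^2-dz^2+2e^{mx}\,dt\,dy$, and let $(M_2,g_2)$ be the Som-Raychaudhuri spacetime, i.e. the region $\{r>0\}$ of $\mathbb{R}^4$ with coordinates $(t,\phi,r,z)$ and metric $g_2=(dt+ar^2\,d\phi)^2-r^2\,d\phi^2-dr^2-dz^2$. Then both $(M_1,g_1)$ and $(M_2,g_2)$ are Ricci generalized pseudosymmetric and are manifolds of pseudosymmetric Weyl conformal curvature tensor, and in both of them the Ricci tensor is Riemann compatible, conformal compatible, concircular compatible and conharmonic compatible, and is cyclic parallel but not of Codazzi type.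
   Context: Notation for a semi-Riemannian manifold $(M,g)$ of dimension $n=4$: $\nabla$ Levi-Civita connection, $\mathcal R(X,Y)=[\nabla_X,\nabla_Y]-\nabla_{[X,Y]}$, $R(X_1,X_2,X_3,X_4)=g(\mathcal R(X_1,X_2)X_3,X_4)$, $S$ Ricci tensor, $\kappa$ scalar curvature, $\mathcal S$ Ricci operator. For a symmetric $(0,2)$-tensor $A$, $(X\wedge_AY)Z=A(Y,Z)X-A(X,Z)Y$. Weyl operator $\mathcal C(X,Y)=\mathcal R(X,Y)-\frac{1}{n-2}(X\wedge_g\mathcal SY+\mathcal SX\wedge_gY-\frac{\kappa}{n-1}X\wedge_gY)$, concircular $\mathcal W(X,Y)=\mathcal R(X,Y)-\frac{\kappa}{n(n-1)}X\wedge_gY$, conharmonic $\mathcal K(X,Y)=\mathcal R(X,Y)-\frac{1}{n-2}(X\wedge_g\mathcal SY+\mathcal SX\wedge_gY)$; $C,W,K$ the associated $(0,4)$-tensors ($T(X_1,X_2,X_3,X_4)=g(\mathcal T(X_1,X_2)X_3,X_4)$). For an endomorphism $\mathcal H$ and $(0,k)$-tensor $T$, $(\mathcal H\cdot T)(X_1,\dots,X_k)=-\sum_iT(X_1,\dots,\mathcal HX_i,\dots,X_k)$; $(R\cdot T)(X_1,\dots,X_k,X,Y)=(\mathcal R(X,Y)\cdot T)(X_1,\dots,X_k)$, $C\cdot T$ analogously with $\mathcal C(X,Y)$, and $Q(A,T)(X_1,\dots,X_k,X,Y)=((X\wedge_AY)\cdot T)(X_1,\dots,X_k)$. $M$ is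 Ricci generalized pseudosymmetric if $R\cdot R=L\,Q(S,R)$ for a smooth function $L$. $M$ is a manifold of pseudosymmetric Weyl conformal curvature tensor if $C\cdot C=L\,Q(g,C)$ for a smooth function $L$. The Ricci tensor is of Codazzi type if $(\nabla_{X_1}S)(X_2,X_3)=(\nabla_{X_2}S)(X_1,X_3)$, and cyclic parallel if $(\nabla_{X_1}S)(X_2,X_3)+(\nabla_{X_2}S)(X_3,X_1)+(\nabla_{X_3}S)(X_1,X_2)=0$. A symmetric $(0,2)$-tensor $E$ with endomorphism $\mathcal E$ ($g(\mathcal EX,Y)=E(X,Y)$) is Riemann compatible if $R(\mathcal EX_1,X,X_2,X_3)+R(\mathcal EX_2,X,X_3,X_1)+R(\mathcal EX_3,X,X_1,X_2)=0$; conformal, concircular and conharmonic compatibility are defined with $R$ replaced by $C$, $W$, $K$ respectively. *)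

theory Defs
  imports "HOL-Analysis.Analysis"
begin

text \<open>Coordinate (chart) formalisation of a semi-Riemannian 4-manifold given as an
open region U of R^4 with metric components g p i j (coordinate indices of type 4).
Tangent vectors are represented by their coordinate components (real^4).\<close>

type_synonym pt = "real^4"
type_synonym metric = "pt \<Rightarrow> 4 \<Rightarrow> 4 \<Rightarrow> real"
type_synonym tensor4 = "pt \<Rightarrow> pt \<Rightarrow> pt \<Rightarrow> pt \<Rightarrow> pt \<Rightarrow> real"

definition e :: "4 \<Rightarrow> pt" where "e k = axis k 1"

definition pd :: "4 \<Rightarrow> (pt \<Rightarrow> real) \<Rightarrow> pt \<Rightarrow> real" where
  "pd k f p = deriv (\<lambda>s. f (p + s *\<^sub>R e k)) 0"

fun iter_pd :: "4 list \<Rightarrow> (pt \<Rightarrow> real) \<Rightarrow> pt \<Rightarrow> real" where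
  "iter_pd [] f = f"
| "iter_pd (k # ks) f = pd k (iter_pd ks f)"

definition smooth_on_U :: "pt set \<Rightarrow> (pt \<Rightarrow> real) \<Rightarrow> bool" where
  "smooth_on_U U f \<longleftrightarrow> (\<forall>ks. iter_pd ks f differentiable_on U)"

definition ginv :: "metric \<Rightarrow> pt \<Rightarrow> real^4^4" where
  "ginv g p = matrix_inv (\<chi> i j. g p i j)"

definition gv :: "metric \<Rightarrow> pt \<Rightarrow> pt \<Rightarrow> pt \<Rightarrow> real" where
  "gv g p X Y = (\<Sum>i\<in>UNIV. \<Sum>j\<in>UNIV. g p i j * X$i * Y$j)"

text \<open>Christoffel symbols: Gam g p k i j = Gamma^k_{ij}, so nabla_{d_i} d_j = sum_k Gamma^k_{ij} d_k\<close>
definition Gam :: "metric \<Rightarrow> pt \<Rightarrow> 4 \<Rightarrow> 4 \<Rightarrow> 4 \<Rightarrow> real" where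
  "Gam g p k i j = (1/2) * (\<Sum>l\<in>UNIV. ginv g p $ k $ l *
      (pd i (\<lambda>q. g q j l) p + pd j (\<lambda>q. g q i l) p - pd l (\<lambda>q. g q i j) p))"

text \<open>Rc g p i j k l = l-th component of R(d_i,d_j)d_k, with R(X,Y) = [nabla_X,nabla_Y] - nabla_[X,Y]\<close>
definition Rc :: "metric \<Rightarrow> pt \<Rightarrow> 4 \<Rightarrow> 4 \<Rightarrow> 4 \<Rightarrow> 4 \<Rightarrow> real" where
  "Rc g p i j k l = pd i (\<lambda>q. Gam g q l j k) p - pd j (\<lambda>q. Gam g q l i k) p
     + (\<Sum>m\<in>UNIV. Gam g p m j k * Gam g p l i m - Gam g p m i k * Gam g p l j m)"

definition Rop :: "metric \<Rightarrow> pt \<Rightarrow> pt \<Rightarrow> pt \<Rightarrow> pt \<Rightarrow> pt" where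
  "Rop g p X Y Z = (\<chi> l. \<Sum>i\<in>UNIV. \<Sum>j\<in>UNIV. \<Sum>k\<in>UNIV. Rc g p i j k l * X$i * Y$j * Z$k)"

definition Rt :: "metric \<Rightarrow> tensor4" where
  "Rt g p X1 X2 X3 X4 = gv g p (Rop g p X1 X2 X3) X4"

definition Ric :: "metric \<Rightarrow> pt \<Rightarrow> pt \<Rightarrow> pt \<Rightarrow> real" where
  "Ric g p X Y = (\<Sum>i\<in>UNIV. (Rop g p (e i) X Y) $ i)"

definition Ricop :: "metric \<Rightarrow> pt \<Rightarrow> pt \<Rightarrow> pt" where
  "Ricop g p X = (\<chi> l. \<Sum>k\<in>UNIV. ginv g p $ l $ k * Ric g p (e k) X)"

definition scal :: "metric \<Rightarrow> pt \<Rightarrow> real" where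
  "scal g p = (\<Sum>i\<in>UNIV. \<Sum>j\<in>UNIV. ginv g p $ i $ j * Ric g p (e i) (e j))"

definition wedge :: "(pt \<Rightarrow> pt \<Rightarrow> real) \<Rightarrow> pt \<Rightarrow> pt \<Rightarrow> pt \<Rightarrow> pt" where
  "wedge A X Y Z = A Y Z *\<^sub>R X - A X Z *\<^sub>R Y"

text \<open>Weyl, concircular and conharmonic operators, n = 4\<close>
definition Cop :: "metric \<Rightarrow> pt \<Rightarrow> pt \<Rightarrow> pt \<Rightarrow> pt \<Rightarrow> pt" where
  "Cop g p X Y Z = Rop g p X Y Z - (1/2) *\<^sub>R
     (wedge (gv g p) X (Ricop g p Y) Z + wedge (gv g p) (Ricop g p X) Y Z
      - (scal g p / 3) *\<^sub>R wedge (gv g p) X Y Z)"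

definition Wop :: "metric \<Rightarrow> pt \<Rightarrow> pt \<Rightarrow> pt \<Rightarrow> pt \<Rightarrow> pt" where
  "Wop g p X Y Z = Rop g p X Y Z - (scal g p / 12) *\<^sub>R wedge (gv g p) X Y Z"

definition Kop :: "metric \<Rightarrow> pt \<Rightarrow> pt \<Rightarrow> pt \<Rightarrow> pt \<Rightarrow> pt" where
  "Kop g p X Y Z = Rop g p X Y Z - (1/2) *\<^sub>R
     (wedge (gv g p) X (Ricop g p Y) Z + wedge (gv g p) (Ricop g p X) Y Z)"

definition Ct :: "metric \<Rightarrow> tensor4" where
  "Ct g p X1 X2 X3 X4 = gv g p (Cop g p X1 X2 X3) X4"
definition Wt :: "metric \<Rightarrow> tensor4" where
  "Wt g p X1 X2 X3 X4 = gv g p (Wop g p X1 X2 X3) X4"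
definition Kt :: "metric \<Rightarrow> tensor4" where
  "Kt g p X1 X2 X3 X4 = gv g p (Kop g p X1 X2 X3) X4"

definition dot4 :: "(pt \<Rightarrow> pt) \<Rightarrow> (pt \<Rightarrow> pt \<Rightarrow> pt \<Rightarrow> pt \<Rightarrow> real) \<Rightarrow> pt \<Rightarrow> pt \<Rightarrow> pt \<Rightarrow> pt \<Rightarrow> real" where
  "dot4 H T X1 X2 X3 X4 = - (T (H X1) X2 X3 X4 + T X1 (H X2) X3 X4
                            + T X1 X2 (H X3) X4 + T X1 X2 X3 (H X4))"

definition Qt :: "(pt \<Rightarrow> pt \<Rightarrow> real) \<Rightarrow> (pt \<Rightarrow> pt \<Rightarrow> pt \<Rightarrow> pt \<Rightarrow> real)
                  \<Rightarrow> pt \<Rightarrow> pt \<Rightarrow> pt \<Rightarrow> pt \<Rightarrow> pt \<Rightarrow> pt \<Rightarrow> real" where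
  "Qt A T X1 X2 X3 X4 X Y = dot4 (wedge A X Y) T X1 X2 X3 X4"

definition RdotR :: "metric \<Rightarrow> pt \<Rightarrow> pt \<Rightarrow> pt \<Rightarrow> pt \<Rightarrow> pt \<Rightarrow> pt \<Rightarrow> pt \<Rightarrow> real" where
  "RdotR g p X1 X2 X3 X4 X Y = dot4 (Rop g p X Y) (Rt g p) X1 X2 X3 X4"
definition CdotC :: "metric \<Rightarrow> pt \<Rightarrow> pt \<Rightarrow> pt \<Rightarrow> pt \<Rightarrow> pt \<Rightarrow> pt \<Rightarrow> pt \<Rightarrow> real" where
  "CdotC g p X1 X2 X3 X4 X Y = dot4 (Cop g p X Y) (Ct g p) X1 X2 X3 X4"

definition ricci_gen_pseudosymmetric :: "metric \<Rightarrow> pt set \<Rightarrow> bool" where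
  "ricci_gen_pseudosymmetric g U \<longleftrightarrow> (\<exists>L. smooth_on_U U L \<and>
     (\<forall>p\<in>U. \<forall>X1 X2 X3 X4 X Y. RdotR g p X1 X2 X3 X4 X Y
              = L p * Qt (Ric g p) (Rt g p) X1 X2 X3 X4 X Y))"

definition weyl_pseudosymmetric :: "metric \<Rightarrow> pt set \<Rightarrow> bool" where
  "weyl_pseudosymmetric g U \<longleftrightarrow> (\<exists>L. smooth_on_U U L \<and>
     (\<forall>p\<in>U. \<forall>X1 X2 X3 X4 X Y. CdotC g p X1 X2 X3 X4 X Y
              = L p * Qt (gv g p) (Ct g p) X1 X2 X3 X4 X Y))"

definition nablaRic :: "metric \<Rightarrow> pt \<Rightarrow> pt \<Rightarrow> pt \<Rightarrow> pt \<Rightarrow> real" where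
  "nablaRic g p X1 X2 X3 = (\<Sum>i\<in>UNIV. \<Sum>j\<in>UNIV. \<Sum>k\<in>UNIV. X1$i * X2$j * X3$k *
     (pd i (\<lambda>q. Ric g q (e j) (e k)) p
      - (\<Sum>m\<in>UNIV. Gam g p m i j * Ric g p (e m) (e k))
      - (\<Sum>m\<in>UNIV. Gam g p m i k * Ric g p (e j) (e m))))"

definition ricci_codazzi :: "metric \<Rightarrow> pt set \<Rightarrow> bool" where
  "ricci_codazzi g U \<longleftrightarrow> (\<forall>p\<in>U. \<forall>X1 X2 X3.
     nablaRic g p X1 X2 X3 = nablaRic g p X2 X1 X3)"

definition ricci_cyclic_parallel :: "metric \<Rightarrow> pt set \<Rightarrow> bool" where
  "ricci_cyclic_parallel g U \<longleftrightarrow> (\<forall>p\<in>U. \<forall>X1 X2 X3.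
     nablaRic g p X1 X2 X3 + nablaRic g p X2 X3 X1 + nablaRic g p X3 X1 X2 = 0)"

definition ricci_compatible :: "(metric \<Rightarrow> tensor4) \<Rightarrow> metric \<Rightarrow> pt set \<Rightarrow> bool" where
  "ricci_compatible T g U \<longleftrightarrow> (\<forall>p\<in>U. \<forall>X X1 X2 X3.
     T g p (Ricop g p X1) X X2 X3 + T g p (Ricop g p X2) X X3 X1
     + T g p (Ricop g p X3) X X1 X2 = 0)"

text \<open>Goedel metric, coordinates (x,y,z,t) = indices 0,1,2,3:
  g = dt^2 + 1/2 e^(2mx) dy^2 - dx^2 - dz^2 + 2 e^(mx) dt dy\<close>
definition godel_metric :: "real \<Rightarrow> metric" where
  "godel_metric m p i j =
     (if i = 3 \<and> j = 3 then 1
      else if i = 1 \<and> j = 1 then exp (2 * m * p$0) / 2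
      else if i = 0 \<and> j = 0 then -1
      else if i = 2 \<and> j = 2 then -1
      else if (i = 3 \<and> j = 1) \<or> (i = 1 \<and> j = 3) then exp (m * p$0)
      else 0)"

text \<open>Som-Raychaudhuri metric, coordinates (t,phi,r,z) = indices 0,1,2,3:
  g = (dt + a r^2 dphi)^2 - r^2 dphi^2 - dr^2 - dz^2\<close>
definition som_ray_metric :: "real \<Rightarrow> metric" where
  "som_ray_metric a p i j =
     (if i = 0 \<and> j = 0 then 1
      else if (i = 0 \<and> j = 1) \<or> (i = 1 \<and> j = 0) then a * (p$2)^2
      else if i = 1 \<and> j = 1 then a^2 * (p$2)^4 - (p$2)^2
      else if i = 2 \<and> j = 2 then -1
      else if i = 3 \<and> j = 3 then -1
      else 0)"

end

theory Submission
  imports Defs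
begin

text \<open>Both metrics depend on a single coordinate, and both admit a coframe (depending on that
coordinate) in which the metric, the curvature operator, the Ricci operator and the scalar
curvature have constant components. All conditions of the theorem except the two on the
covariant derivative of the Ricci tensor are pointwise and natural under such a change of
frame, so they reduce to polynomial identities between these constant components, valid for
every value of the parameter. Cyclic parallelism and the failure of the Codazzi condition are
read off the explicit Christoffel symbols and Ricci components.\<close>

section \<open>Coordinates and partial derivatives\<close>

lemma UNIV_4_eq: "(UNIV :: 4 set) = {0, 1, 2, 3}"
proof -
  have "x \<in> {0, 1, 2, 3}" for x :: 4 using exhaust_4[of x] by auto
  then show ?thesis by auto
qed

lemma sum_4_eq: "sum f (UNIV :: 4 set) = f 0 + f 1 + f 2 + f 3"
  unfolding UNIV_4_eq by (simp add: ac_simps)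

lemma forall_4_eq: "(\<forall>i :: 4. P i) \<longleftrightarrow> P 0 \<and> P 1 \<and> P 2 \<and> P 3"
  by (metis UNIV_4_eq UNIV_I empty_iff insert_iff)

lemma vec4_eq_iff: "(X :: pt) = Y \<longleftrightarrow> X$0 = Y$0 \<and> X$1 = Y$1 \<and> X$2 = Y$2 \<and> X$3 = Y$3"
  by (simp add: vec_eq_iff forall_4_eq)

lemma index_4_neq:
  "(0::4) \<noteq> 1" "(0::4) \<noteq> 2" "(0::4) \<noteq> 3" "(1::4) \<noteq> 0" "(1::4) \<noteq> 2" "(1::4) \<noteq> 3"
  "(2::4) \<noteq> 0" "(2::4) \<noteq> 1" "(2::4) \<noteq> 3" "(3::4) \<noteq> 0" "(3::4) \<noteq> 1" "(3::4) \<noteq> 2"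
  by simp_all

lemma e_nth: "e k $ j = (if j = k then 1 else 0)"
  by (simp add: e_def axis_def)

text \<open>A cheap normal form for expanded component expressions; the heavy arithmetic is left
to a subsequent call of the full simplifier.\<close>

lemmas component_simps = vec_lambda_beta index_4_neq if_True if_False simp_thms
  mult_zero_left mult_zero_right add_0_left add_0_right diff_0 diff_0_right
  mult_1_left mult_1_right e_nth minus_zero

lemma power4_eq_mult: "(x :: real) ^ 4 = x * x * x * x"
  by (simp add: power_numeral_reduce power2_eq_square mult.assoc numeral_eq_Suc)

lemma matrix_inv_eqI:
  fixes A B :: "'a::comm_semiring_1^'n^'n"
  assumes "A ** B = mat 1" and "B ** A = mat 1"
  shows "matrix_inv A = B"
proof -
  define C where "C = matrix_inv A"
  have "A ** C = mat 1 \<and> C ** A = mat 1"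
    unfolding C_def matrix_inv_def by (rule someI[of _ B]) (use assms in blast)
  then have "C = C ** (A ** B)" "C ** A = mat 1" using assms by simp_all
  then show ?thesis by (simp add: matrix_mul_assoc C_def)
qed

lemma pd_function_of_coordinate:
  fixes h :: "real \<Rightarrow> real"
  assumes S: "open S" and p: "p$c \<in> S" and f: "\<And>q. q$c \<in> S \<Longrightarrow> f q = h (q$c)"
    and h: "(h has_real_derivative D) (at (p$c))"
  shows "pd k f p = (if k = c then D else 0)"
proof (cases "k = c")
  case True
  have line: "(p + s *\<^sub>R e k)$c = p$c + s" for s by (simp add: e_nth True)
  define T where "T = {s. p$c + s \<in> S}"
  have "((\<lambda>s. h (p$c + s)) has_real_derivative D) (at 0)"
    using DERIV_shift[of h D 0 "p$c"] h by (simp add: add.commute)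
  moreover have "open T" unfolding T_def
    by (rule open_vimage[OF S, of "\<lambda>s. p$c + s", unfolded vimage_def]) (auto intro: continuous_intros)
  moreover have "0 \<in> T" using p by (simp add: T_def)
  moreover have "h (p$c + s) = f (p + s *\<^sub>R e k)" if "s \<in> T" for s
    using f[of "p + s *\<^sub>R e k"] that unfolding line T_def by simp
  ultimately have "((\<lambda>s. f (p + s *\<^sub>R e k)) has_real_derivative D) (at 0)"
    by (rule has_field_derivative_transform_within_open)
  then show ?thesis unfolding pd_def using True by (simp add: DERIV_imp_deriv)
next
  case False
  then have "(p + s *\<^sub>R e k)$c = p$c" for s by (simp add: e_nth)
  then have "(\<lambda>s. f (p + s *\<^sub>R e k)) = (\<lambda>s. h (p$c))"
    using f p by (metis (no_types, lifting))
  then show ?thesis unfolding pd_def using False by simp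
qed

lemma iter_pd_const: "iter_pd ks (\<lambda>_. c) = (\<lambda>_. if ks = [] then c else 0)"
  by (induction ks) (simp_all add: pd_def)

lemma smooth_on_U_const: "smooth_on_U U (\<lambda>_. c)"
  unfolding smooth_on_U_def iter_pd_const by simp

section \<open>Curvature conditions in a frame\<close>

definition lowered :: "(pt \<Rightarrow> pt \<Rightarrow> real) \<Rightarrow> (pt \<Rightarrow> pt \<Rightarrow> pt \<Rightarrow> pt) \<Rightarrow> pt \<Rightarrow> pt \<Rightarrow> pt \<Rightarrow> pt \<Rightarrow> real" where
  "lowered G Op X1 X2 X3 X4 = G (Op X1 X2 X3) X4"

definition weyl_op :: "(pt \<Rightarrow> pt \<Rightarrow> pt \<Rightarrow> pt) \<Rightarrow> (pt \<Rightarrow> pt) \<Rightarrow> (pt \<Rightarrow> pt \<Rightarrow> real) \<Rightarrow> real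
    \<Rightarrow> pt \<Rightarrow> pt \<Rightarrow> pt \<Rightarrow> pt" where
  "weyl_op R E G s X Y Z = R X Y Z - (1/2) *\<^sub>R
     (wedge G X (E Y) Z + wedge G (E X) Y Z - (s / 3) *\<^sub>R wedge G X Y Z)"

definition concircular_op :: "(pt \<Rightarrow> pt \<Rightarrow> pt \<Rightarrow> pt) \<Rightarrow> (pt \<Rightarrow> pt \<Rightarrow> real) \<Rightarrow> real
    \<Rightarrow> pt \<Rightarrow> pt \<Rightarrow> pt \<Rightarrow> pt" where
  "concircular_op R G s X Y Z = R X Y Z - (s / 12) *\<^sub>R wedge G X Y Z"

definition conharmonic_op :: "(pt \<Rightarrow> pt \<Rightarrow> pt \<Rightarrow> pt) \<Rightarrow> (pt \<Rightarrow> pt) \<Rightarrow> (pt \<Rightarrow> pt \<Rightarrow> real)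
    \<Rightarrow> pt \<Rightarrow> pt \<Rightarrow> pt \<Rightarrow> pt" where
  "conharmonic_op R E G X Y Z = R X Y Z - (1/2) *\<^sub>R (wedge G X (E Y) Z + wedge G (E X) Y Z)"

definition dot_eq_scaled_Q :: "(pt \<Rightarrow> pt \<Rightarrow> pt \<Rightarrow> pt) \<Rightarrow> (pt \<Rightarrow> pt \<Rightarrow> pt \<Rightarrow> pt \<Rightarrow> real)
    \<Rightarrow> (pt \<Rightarrow> pt \<Rightarrow> real) \<Rightarrow> real \<Rightarrow> bool" where
  "dot_eq_scaled_Q H T A L \<longleftrightarrow>
     (\<forall>X Y X1 X2 X3 X4. dot4 (H X Y) T X1 X2 X3 X4 = L * Qt A T X1 X2 X3 X4 X Y)"

definition compatible :: "(pt \<Rightarrow> pt \<Rightarrow> pt \<Rightarrow> pt \<Rightarrow> real) \<Rightarrow> (pt \<Rightarrow> pt) \<Rightarrow> bool" where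
  "compatible T E \<longleftrightarrow> (\<forall>X X1 X2 X3. T (E X1) X X2 X3 + T (E X2) X X3 X1 + T (E X3) X X1 X2 = 0)"

lemma wedge_linear_image:
  assumes "linear Phi" and "\<And>U V. A U V = A' (Phi U) (Phi V)"
  shows "Phi (wedge A X Y Z) = wedge A' (Phi X) (Phi Y) (Phi Z)"
  unfolding wedge_def linear_diff[OF assms(1)] linear_scale[OF assms(1)] assms(2) ..

lemma dot_eq_scaled_Q_linear_image:
  assumes Phi: "linear Phi"
    and T: "\<And>X1 X2 X3 X4. T X1 X2 X3 X4 = T' (Phi X1) (Phi X2) (Phi X3) (Phi X4)"
    and H: "\<And>X Y Z. Phi (H X Y Z) = H' (Phi X) (Phi Y) (Phi Z)"
    and A: "\<And>U V. A U V = A' (Phi U) (Phi V)"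
    and "dot_eq_scaled_Q H' T' A' L"
  shows "dot_eq_scaled_Q H T A L"
  unfolding dot_eq_scaled_Q_def
proof (intro allI)
  fix X Y X1 X2 X3 X4
  have "dot4 (H X Y) T X1 X2 X3 X4 = dot4 (H' (Phi X) (Phi Y)) T' (Phi X1) (Phi X2) (Phi X3) (Phi X4)"
    unfolding dot4_def T H ..
  moreover have "Qt A T X1 X2 X3 X4 X Y = Qt A' T' (Phi X1) (Phi X2) (Phi X3) (Phi X4) (Phi X) (Phi Y)"
    unfolding Qt_def dot4_def T wedge_linear_image[OF Phi, where A=A and A'=A', OF A] ..
  ultimately show "dot4 (H X Y) T X1 X2 X3 X4 = L * Qt A T X1 X2 X3 X4 X Y"
    using \<open>dot_eq_scaled_Q H' T' A' L\<close> unfolding dot_eq_scaled_Q_def by simp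
qed

lemma compatible_image:
  assumes "\<And>X1 X2 X3 X4. T X1 X2 X3 X4 = T' (Phi X1) (Phi X2) (Phi X3) (Phi X4)"
    and "\<And>X. Phi (E X) = E' (Phi X)"
    and "compatible T' E'"
  shows "compatible T E"
  using assms unfolding compatible_def by simp

lemma Rt_eq_lowered: "Rt g p = lowered (gv g p) (Rop g p)"
  by (intro ext) (simp add: Rt_def lowered_def)

lemma Cop_eq_weyl_op: "Cop g p = weyl_op (Rop g p) (Ricop g p) (gv g p) (scal g p)"
  by (intro ext) (simp add: Cop_def weyl_op_def)

lemma Ct_eq_lowered: "Ct g p = lowered (gv g p) (weyl_op (Rop g p) (Ricop g p) (gv g p) (scal g p))"
  by (intro ext) (simp add: Ct_def Cop_eq_weyl_op lowered_def)

lemma Wt_eq_lowered: "Wt g p = lowered (gv g p) (concircular_op (Rop g p) (gv g p) (scal g p))"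
  by (intro ext) (simp add: Wt_def Wop_def lowered_def concircular_op_def)

lemma Kt_eq_lowered: "Kt g p = lowered (gv g p) (conharmonic_op (Rop g p) (Ricop g p) (gv g p))"
  by (intro ext) (simp add: Kt_def Kop_def lowered_def conharmonic_op_def)

locale constant_frame =
  fixes g :: metric and p :: pt and Phi :: "pt \<Rightarrow> pt" and eta :: "pt \<Rightarrow> pt \<Rightarrow> real"
    and R0 :: "pt \<Rightarrow> pt \<Rightarrow> pt \<Rightarrow> pt" and E0 :: "pt \<Rightarrow> pt" and S0 :: "pt \<Rightarrow> pt \<Rightarrow> real"
    and s0 :: real
  assumes linear: "linear Phi"
    and metric: "gv g p X Y = eta (Phi X) (Phi Y)"
    and curvature: "Phi (Rop g p X Y Z) = R0 (Phi X) (Phi Y) (Phi Z)"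
    and ricci_op: "Phi (Ricop g p X) = E0 (Phi X)"
    and ricci: "Ric g p X Y = S0 (Phi X) (Phi Y)"
    and scalar: "scal g p = s0"
begin

lemmas wedge_frame = wedge_linear_image[OF linear, where A="gv g p" and A'=eta, OF metric]

lemma lowered_frame:
  assumes "\<And>X Y Z. Phi (Op X Y Z) = Op0 (Phi X) (Phi Y) (Phi Z)"
  shows "lowered (gv g p) Op X1 X2 X3 X4 = lowered eta Op0 (Phi X1) (Phi X2) (Phi X3) (Phi X4)"
  unfolding lowered_def metric assms ..

lemma weyl_op_frame:
  "Phi (weyl_op (Rop g p) (Ricop g p) (gv g p) (scal g p) X Y Z) = weyl_op R0 E0 eta s0 (Phi X) (Phi Y) (Phi Z)"
  unfolding weyl_op_def linear_diff[OF linear] linear_add[OF linear] linear_scale[OF linear]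
    curvature wedge_frame ricci_op scalar ..

lemma concircular_op_frame:
  "Phi (concircular_op (Rop g p) (gv g p) (scal g p) X Y Z) = concircular_op R0 eta s0 (Phi X) (Phi Y) (Phi Z)"
  unfolding concircular_op_def linear_diff[OF linear] linear_scale[OF linear]
    curvature wedge_frame scalar ..

lemma conharmonic_op_frame:
  "Phi (conharmonic_op (Rop g p) (Ricop g p) (gv g p) X Y Z) = conharmonic_op R0 E0 eta (Phi X) (Phi Y) (Phi Z)"
  unfolding conharmonic_op_def linear_diff[OF linear] linear_add[OF linear] linear_scale[OF linear]
    curvature wedge_frame ricci_op ..

lemma curvature_conditions_at:
  assumes RR: "dot_eq_scaled_Q R0 (lowered eta R0) S0 1"
    and CC: "dot_eq_scaled_Q (weyl_op R0 E0 eta s0) (lowered eta (weyl_op R0 E0 eta s0)) eta L"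
    and compatible_R: "compatible (lowered eta R0) E0"
    and compatible_C: "compatible (lowered eta (weyl_op R0 E0 eta s0)) E0"
    and compatible_W: "compatible (lowered eta (concircular_op R0 eta s0)) E0"
    and compatible_K: "compatible (lowered eta (conharmonic_op R0 E0 eta)) E0"
  shows "dot_eq_scaled_Q (Rop g p) (Rt g p) (Ric g p) 1
    \<and> dot_eq_scaled_Q (Cop g p) (Ct g p) (gv g p) L
    \<and> compatible (Rt g p) (Ricop g p) \<and> compatible (Ct g p) (Ricop g p)
    \<and> compatible (Wt g p) (Ricop g p) \<and> compatible (Kt g p) (Ricop g p)"
proof -
  note R = lowered_frame[where Op="Rop g p", OF curvature, folded Rt_eq_lowered]
  note C = lowered_frame[where Op="weyl_op (Rop g p) (Ricop g p) (gv g p) (scal g p)",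
      OF weyl_op_frame, folded Ct_eq_lowered]
  note W = lowered_frame[where Op="concircular_op (Rop g p) (gv g p) (scal g p)",
      OF concircular_op_frame, folded Wt_eq_lowered]
  note K = lowered_frame[where Op="conharmonic_op (Rop g p) (Ricop g p) (gv g p)",
      OF conharmonic_op_frame, folded Kt_eq_lowered]
  have "dot_eq_scaled_Q (Rop g p) (Rt g p) (Ric g p) 1"
    by (rule dot_eq_scaled_Q_linear_image[where Phi=Phi and T'="lowered eta R0" and H'=R0 and A'=S0,
          OF linear R curvature ricci RR])
  moreover have "dot_eq_scaled_Q (Cop g p) (Ct g p) (gv g p) L"
    by (rule dot_eq_scaled_Q_linear_image[where Phi=Phi and T'="lowered eta (weyl_op R0 E0 eta s0)"
          and H'="weyl_op R0 E0 eta s0" and A'=eta,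
          OF linear C weyl_op_frame[folded Cop_eq_weyl_op] metric CC])
  moreover have "compatible (Rt g p) (Ricop g p)" "compatible (Ct g p) (Ricop g p)"
    "compatible (Wt g p) (Ricop g p)" "compatible (Kt g p) (Ricop g p)"
    by (rule compatible_image[where Phi=Phi and E'=E0, OF R ricci_op compatible_R]
        compatible_image[where Phi=Phi and E'=E0, OF C ricci_op compatible_C]
        compatible_image[where Phi=Phi and E'=E0, OF W ricci_op compatible_W]
        compatible_image[where Phi=Phi and E'=E0, OF K ricci_op compatible_K])+
  ultimately show ?thesis by blast
qed

end

lemma curvature_conditions_via_frames:
  assumes frame: "\<And>p. p \<in> U \<Longrightarrow> constant_frame g p (Phi p) eta R0 E0 S0 s0"
    and RR: "dot_eq_scaled_Q R0 (lowered eta R0) S0 1"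
    and CC: "dot_eq_scaled_Q (weyl_op R0 E0 eta s0) (lowered eta (weyl_op R0 E0 eta s0)) eta L"
    and "compatible (lowered eta R0) E0"
    and "compatible (lowered eta (weyl_op R0 E0 eta s0)) E0"
    and "compatible (lowered eta (concircular_op R0 eta s0)) E0"
    and "compatible (lowered eta (conharmonic_op R0 E0 eta)) E0"
  shows "ricci_gen_pseudosymmetric g U \<and> weyl_pseudosymmetric g U
    \<and> ricci_compatible Rt g U \<and> ricci_compatible Ct g U
    \<and> ricci_compatible Wt g U \<and> ricci_compatible Kt g U"
proof -
  note pointwise = constant_frame.curvature_conditions_at[OF frame RR CC assms(4-7)]
  have "ricci_gen_pseudosymmetric g U"
    unfolding ricci_gen_pseudosymmetric_def RdotR_def
    by (intro exI[of _ "\<lambda>_. 1"] conjI smooth_on_U_const ballI allI)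
      (use pointwise in \<open>simp add: dot_eq_scaled_Q_def\<close>)
  moreover have "weyl_pseudosymmetric g U"
    unfolding weyl_pseudosymmetric_def CdotC_def
    by (intro exI[of _ "\<lambda>_. L"] conjI smooth_on_U_const ballI allI)
      (use pointwise in \<open>simp add: dot_eq_scaled_Q_def\<close>)
  moreover have "ricci_compatible T g U" if "\<And>p. p \<in> U \<Longrightarrow> compatible (T g p) (Ricop g p)" for T
    using that unfolding ricci_compatible_def compatible_def by blast
  ultimately show ?thesis using pointwise by blast
qed

section \<open>The frame models\<close>

definition wd :: "4 \<Rightarrow> 4 \<Rightarrow> pt \<Rightarrow> pt \<Rightarrow> real" where
  "wd i j X Y = X$i * Y$j - X$j * Y$i"

text \<open>Goedel, in the frame \<open>\<theta>\<^sup>0 = dt + e\<^sup>m\<^sup>x dy, \<theta>\<^sup>1 = dx, \<theta>\<^sup>2 = e\<^sup>m\<^sup>x dy / 2, \<theta>\<^sup>3 = dz\<close>;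
the curvature scale is \<open>n = m\<^sup>2/2\<close>.\<close>

definition godel_frame :: "real \<Rightarrow> real \<Rightarrow> pt \<Rightarrow> pt" where
  "godel_frame m t X = (\<chi> i. if i = 0 then X$3 + exp (m*t) * X$1 else if i = 1 then X$0
      else if i = 2 then exp (m*t) * X$1 / 2 else X$2)"

definition godel_eta :: "pt \<Rightarrow> pt \<Rightarrow> real" where
  "godel_eta X Y = X$0*Y$0 - X$1*Y$1 - 2*(X$2*Y$2) - X$3*Y$3"

definition godel_frame_curv :: "real \<Rightarrow> pt \<Rightarrow> pt \<Rightarrow> pt \<Rightarrow> pt" where
  "godel_frame_curv n X Y Z = (\<chi> l. if l = 0 then n * (wd 1 0 X Y * Z$1) - 2*n*(wd 0 2 X Y * Z$2)
      else if l = 1 then n * (wd 1 0 X Y * Z$0) + 2*n*(wd 1 2 X Y * Z$2)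
      else if l = 2 then - n * (wd 1 2 X Y * Z$1) - n*(wd 0 2 X Y * Z$0) else 0)"

definition godel_frame_ricci :: "real \<Rightarrow> pt \<Rightarrow> pt \<Rightarrow> real" where
  "godel_frame_ricci n X Y = 2 * n * X$0 * Y$0"

definition godel_frame_ricci_op :: "real \<Rightarrow> pt \<Rightarrow> pt" where
  "godel_frame_ricci_op n X = (\<chi> l. if l = 0 then 2*n*X$0 else 0)"

text \<open>Som-Raychaudhuri, in the frame \<open>\<theta>\<^sup>0 = dt + a r\<^sup>2 d\<phi>, \<theta>\<^sup>1 = r d\<phi>, \<theta>\<^sup>2 = dr, \<theta>\<^sup>3 = dz\<close>.\<close>

definition som_ray_frame :: "real \<Rightarrow> real \<Rightarrow> pt \<Rightarrow> pt" where
  "som_ray_frame a r X = (\<chi> i. if i = 0 then X$0 + a * r^2 * X$1 else if i = 1 then r * X$1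
      else if i = 2 then X$2 else X$3)"

definition som_ray_eta :: "pt \<Rightarrow> pt \<Rightarrow> real" where
  "som_ray_eta X Y = X$0*Y$0 - X$1*Y$1 - X$2*Y$2 - X$3*Y$3"

definition som_ray_frame_riemann :: "real \<Rightarrow> pt \<Rightarrow> pt \<Rightarrow> pt \<Rightarrow> pt \<Rightarrow> real" where
  "som_ray_frame_riemann a X Y Z W =
     a^2 * (wd 0 1 X Y * wd 0 1 Z W + wd 0 2 X Y * wd 0 2 Z W + 3 * (wd 1 2 X Y * wd 1 2 Z W))"

definition som_ray_frame_curv :: "real \<Rightarrow> pt \<Rightarrow> pt \<Rightarrow> pt \<Rightarrow> pt" where
  "som_ray_frame_curv a X Y Z =
     (\<chi> l. (if l = 0 then 1 else -1) * som_ray_frame_riemann a X Y Z (axis l 1))"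

definition som_ray_frame_ricci :: "real \<Rightarrow> pt \<Rightarrow> pt \<Rightarrow> real" where
  "som_ray_frame_ricci a X Y = 2*a^2 * (X$0 * Y$0 + X$1*Y$1 + X$2*Y$2)"

definition som_ray_frame_ricci_op :: "real \<Rightarrow> pt \<Rightarrow> pt" where
  "som_ray_frame_ricci_op a X = (\<chi> l. if l = 0 then 2*a^2*X$0 else if l = 1 then -2*a^2*X$1
      else if l = 2 then -2*a^2*X$2 else 0)"

lemmas frame_model_defs = dot_eq_scaled_Q_def compatible_def dot4_def Qt_def wedge_def lowered_def
  weyl_op_def concircular_op_def conharmonic_op_def wd_def axis_def
  godel_eta_def godel_frame_curv_def godel_frame_ricci_def godel_frame_ricci_op_def
  som_ray_eta_def som_ray_frame_riemann_def som_ray_frame_curv_def som_ray_frame_ricci_def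
  som_ray_frame_ricci_op_def

lemma godel_frame_RR:
  "dot_eq_scaled_Q (godel_frame_curv n) (lowered godel_eta (godel_frame_curv n)) (godel_frame_ricci n) 1"
  unfolding frame_model_defs by (intro allI) (simp; algebra)

lemma godel_frame_CC:
  "dot_eq_scaled_Q (weyl_op (godel_frame_curv n) (godel_frame_ricci_op n) godel_eta (2*n))
     (lowered godel_eta (weyl_op (godel_frame_curv n) (godel_frame_ricci_op n) godel_eta (2*n)))
     godel_eta (n/3)"
  unfolding frame_model_defs by (intro allI) (simp; algebra)

lemma godel_frame_compatible:
  "compatible (lowered godel_eta (godel_frame_curv n)) (godel_frame_ricci_op n)"
  "compatible (lowered godel_eta (weyl_op (godel_frame_curv n) (godel_frame_ricci_op n) godel_eta (2*n)))
     (godel_frame_ricci_op n)"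
  "compatible (lowered godel_eta (concircular_op (godel_frame_curv n) godel_eta (2*n)))
     (godel_frame_ricci_op n)"
  "compatible (lowered godel_eta (conharmonic_op (godel_frame_curv n) (godel_frame_ricci_op n) godel_eta))
     (godel_frame_ricci_op n)"
  unfolding frame_model_defs by (intro allI; simp; algebra)+

lemma som_ray_frame_RR:
  "dot_eq_scaled_Q (som_ray_frame_curv a) (lowered som_ray_eta (som_ray_frame_curv a))
     (som_ray_frame_ricci a) 1"
  unfolding frame_model_defs by (intro allI) (simp; algebra)

lemma som_ray_frame_CC:
  "dot_eq_scaled_Q (weyl_op (som_ray_frame_curv a) (som_ray_frame_ricci_op a) som_ray_eta (-2*a^2))
     (lowered som_ray_eta (weyl_op (som_ray_frame_curv a) (som_ray_frame_ricci_op a) som_ray_eta (-2*a^2)))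
     som_ray_eta (2*a^2/3)"
  unfolding frame_model_defs by (intro allI) (simp; algebra)

lemma som_ray_frame_compatible:
  "compatible (lowered som_ray_eta (som_ray_frame_curv a)) (som_ray_frame_ricci_op a)"
  "compatible (lowered som_ray_eta
       (weyl_op (som_ray_frame_curv a) (som_ray_frame_ricci_op a) som_ray_eta (-2*a^2)))
     (som_ray_frame_ricci_op a)"
  "compatible (lowered som_ray_eta (concircular_op (som_ray_frame_curv a) som_ray_eta (-2*a^2)))
     (som_ray_frame_ricci_op a)"
  "compatible (lowered som_ray_eta
       (conharmonic_op (som_ray_frame_curv a) (som_ray_frame_ricci_op a) som_ray_eta))
     (som_ray_frame_ricci_op a)"
  unfolding frame_model_defs by (intro allI; simp; algebra)+

section \<open>The Goedel spacetime\<close>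

definition godel_coeff :: "real \<Rightarrow> real \<Rightarrow> 4 \<Rightarrow> 4 \<Rightarrow> real" where
  "godel_coeff m t i j = (if i = 3 \<and> j = 3 then 1
      else if i = 1 \<and> j = 1 then exp (m*t)^2 / 2
      else if i = 0 \<and> j = 0 then -1
      else if i = 2 \<and> j = 2 then -1
      else if (i = 3 \<and> j = 1) \<or> (i = 1 \<and> j = 3) then exp (m * t)
      else 0)"

definition godel_coeff_deriv :: "real \<Rightarrow> real \<Rightarrow> 4 \<Rightarrow> 4 \<Rightarrow> real" where
  "godel_coeff_deriv m t i j = (if i = 1 \<and> j = 1 then m * exp (m*t)^2
      else if (i = 3 \<and> j = 1) \<or> (i = 1 \<and> j = 3) then m * exp (m * t)
      else 0)"

definition godel_inverse :: "real \<Rightarrow> real \<Rightarrow> real^4^4" where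
  "godel_inverse m t = (\<chi> i j. if i = 0 \<and> j = 0 then -1 else if i = 1 \<and> j = 1 then -2 / exp (m*t)^2
     else if (i = 1 \<and> j = 3) \<or> (i = 3 \<and> j = 1) then 2 / exp (m*t)
     else if i = 2 \<and> j = 2 then -1 else if i = 3 \<and> j = 3 then -1 else 0)"

definition godel_christoffel :: "real \<Rightarrow> real \<Rightarrow> 4 \<Rightarrow> 4 \<Rightarrow> 4 \<Rightarrow> real" where
  "godel_christoffel m t k i j = (if k = 0 \<and> i = 1 \<and> j = 1 then m * exp (m*t)^2 / 2
     else if k = 0 \<and> ((i = 1 \<and> j = 3) \<or> (i = 3 \<and> j = 1)) then m * exp (m*t) / 2
     else if k = 1 \<and> ((i = 0 \<and> j = 3) \<or> (i = 3 \<and> j = 0)) then - m / exp (m*t)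
     else if k = 3 \<and> ((i = 0 \<and> j = 1) \<or> (i = 1 \<and> j = 0)) then m * exp (m*t) / 2
     else if k = 3 \<and> ((i = 0 \<and> j = 3) \<or> (i = 3 \<and> j = 0)) then m
     else 0)"

definition godel_christoffel_deriv :: "real \<Rightarrow> real \<Rightarrow> 4 \<Rightarrow> 4 \<Rightarrow> 4 \<Rightarrow> real" where
  "godel_christoffel_deriv m t k i j = (if k = 0 \<and> i = 1 \<and> j = 1 then m^2 * exp (m*t)^2
     else if k = 0 \<and> ((i = 1 \<and> j = 3) \<or> (i = 3 \<and> j = 1)) then m^2 * exp (m*t) / 2
     else if k = 1 \<and> ((i = 0 \<and> j = 3) \<or> (i = 3 \<and> j = 0)) then m^2 / exp (m*t)
     else if k = 3 \<and> ((i = 0 \<and> j = 1) \<or> (i = 1 \<and> j = 0)) then m^2 * exp (m*t) / 2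
     else 0)"

definition godel_curvature_coeff :: "real \<Rightarrow> real \<Rightarrow> 4 \<Rightarrow> 4 \<Rightarrow> 4 \<Rightarrow> 4 \<Rightarrow> real" where
  "godel_curvature_coeff m t i j k l = (
     if i = 0 \<and> j = 1 \<and> k = 0 \<and> l = 1 then - (m^2 / 2)
     else if i = 0 \<and> j = 1 \<and> k = 0 \<and> l = 3 then m^2 * exp (m*t)
     else if i = 0 \<and> j = 1 \<and> k = 1 \<and> l = 0 then 3 * m^2 * exp (m*t)^2 / 4
     else if i = 0 \<and> j = 1 \<and> k = 3 \<and> l = 0 then m^2 * exp (m*t) / 2
     else if i = 0 \<and> j = 3 \<and> k = 0 \<and> l = 3 then m^2 / 2
     else if i = 0 \<and> j = 3 \<and> k = 1 \<and> l = 0 then m^2 * exp (m*t) / 2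
     else if i = 0 \<and> j = 3 \<and> k = 3 \<and> l = 0 then m^2 / 2
     else if i = 1 \<and> j = 0 \<and> k = 0 \<and> l = 1 then m^2 / 2
     else if i = 1 \<and> j = 0 \<and> k = 0 \<and> l = 3 then - (m^2 * exp (m*t))
     else if i = 1 \<and> j = 0 \<and> k = 1 \<and> l = 0 then - (3 * m^2 * exp (m*t)^2 / 4)
     else if i = 1 \<and> j = 0 \<and> k = 3 \<and> l = 0 then - (m^2 * exp (m*t) / 2)
     else if i = 1 \<and> j = 3 \<and> k = 1 \<and> l = 1 then m^2 * exp (m*t) / 2
     else if i = 1 \<and> j = 3 \<and> k = 1 \<and> l = 3 then - (m^2 * exp (m*t)^2 / 4)
     else if i = 1 \<and> j = 3 \<and> k = 3 \<and> l = 1 then m^2 / 2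
     else if i = 1 \<and> j = 3 \<and> k = 3 \<and> l = 3 then - (m^2 * exp (m*t) / 2)
     else if i = 3 \<and> j = 0 \<and> k = 0 \<and> l = 3 then - (m^2 / 2)
     else if i = 3 \<and> j = 0 \<and> k = 1 \<and> l = 0 then - (m^2 * exp (m*t) / 2)
     else if i = 3 \<and> j = 0 \<and> k = 3 \<and> l = 0 then - (m^2 / 2)
     else if i = 3 \<and> j = 1 \<and> k = 1 \<and> l = 1 then - (m^2 * exp (m*t) / 2)
     else if i = 3 \<and> j = 1 \<and> k = 1 \<and> l = 3 then m^2 * exp (m*t)^2 / 4
     else if i = 3 \<and> j = 1 \<and> k = 3 \<and> l = 1 then - (m^2 / 2)
     else if i = 3 \<and> j = 1 \<and> k = 3 \<and> l = 3 then m^2 * exp (m*t) / 2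
     else 0)"

definition godel_ricci_coeff :: "real \<Rightarrow> real \<Rightarrow> 4 \<Rightarrow> 4 \<Rightarrow> real" where
  "godel_ricci_coeff m t j k = (if j = 1 \<and> k = 1 then m^2 * exp (m*t)^2
     else if (j = 1 \<and> k = 3) \<or> (j = 3 \<and> k = 1) then m^2 * exp (m*t)
     else if j = 3 \<and> k = 3 then m^2 else 0)"

definition godel_ricci_coeff_deriv :: "real \<Rightarrow> real \<Rightarrow> 4 \<Rightarrow> 4 \<Rightarrow> real" where
  "godel_ricci_coeff_deriv m t j k = (if j = 1 \<and> k = 1 then 2 * m^3 * exp (m*t)^2
     else if (j = 1 \<and> k = 3) \<or> (j = 3 \<and> k = 1) then m^3 * exp (m*t) else 0)"

lemma godel_metric_eq_coeff: "godel_metric m q i j = godel_coeff m (q$0) i j"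
  unfolding godel_metric_def godel_coeff_def exp_double[symmetric] by (simp add: mult.assoc)

lemma godel_coeff_has_derivative:
  "((\<lambda>t. godel_coeff m t i j) has_real_derivative godel_coeff_deriv m t i j) (at t)"
proof -
  have "\<forall>i j. ((\<lambda>t. godel_coeff m t i j) has_real_derivative godel_coeff_deriv m t i j) (at t)"
    unfolding forall_4_eq godel_coeff_def godel_coeff_deriv_def
    by (auto intro!: derivative_eq_intros simp: power2_eq_square)
  then show ?thesis by blast
qed

lemma pd_godel_metric:
  "pd k (\<lambda>q. godel_metric m q i j) p = (if k = 0 then godel_coeff_deriv m (p$0) i j else 0)"
  by (rule pd_function_of_coordinate[where S=UNIV and h="\<lambda>t. godel_coeff m t i j"])
    (simp_all add: godel_metric_eq_coeff godel_coeff_has_derivative)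

lemma ginv_godel_metric: "ginv (godel_metric m) q = godel_inverse m (q$0)"
  unfolding ginv_def
proof (rule matrix_inv_eqI)
  have "exp (m * q$0) \<noteq> 0" by simp
  then show "(\<chi> i j. godel_metric m q i j) ** godel_inverse m (q$0) = mat 1"
    and "godel_inverse m (q$0) ** (\<chi> i j. godel_metric m q i j) = mat 1"
    unfolding matrix_matrix_mult_def mat_def vec_eq_iff forall_4_eq sum_4_eq godel_inverse_def
      godel_metric_eq_coeff godel_coeff_def
    by (simp_all add: field_simps power2_eq_square)
qed

lemma Gam_godel_metric: "Gam (godel_metric m) q k i j = godel_christoffel m (q$0) k i j"
proof -
  have "exp (m * q$0) \<noteq> 0" by simp
  then have "\<forall>k i j. Gam (godel_metric m) q k i j = godel_christoffel m (q$0) k i j"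
    unfolding Gam_def ginv_godel_metric pd_godel_metric sum_4_eq forall_4_eq godel_inverse_def
      godel_coeff_deriv_def godel_christoffel_def
    by (simp add: field_simps power2_eq_square)
  then show ?thesis by blast
qed

lemma godel_christoffel_has_derivative:
  "((\<lambda>t. godel_christoffel m t k i j) has_real_derivative godel_christoffel_deriv m t k i j) (at t)"
proof -
  have "\<forall>k i j. ((\<lambda>t. godel_christoffel m t k i j) has_real_derivative godel_christoffel_deriv m t k i j) (at t)"
    unfolding forall_4_eq godel_christoffel_def godel_christoffel_deriv_def
    by (auto intro!: derivative_eq_intros simp: field_simps power2_eq_square)
  then show ?thesis by blast
qed

lemma Rc_godel_metric: "Rc (godel_metric m) p i j k l = godel_curvature_coeff m (p$0) i j k l"
proof -
  have pd_Gam: "pd i (\<lambda>q. godel_christoffel m (q$0) l j k) p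
      = (if i = 0 then godel_christoffel_deriv m (p$0) l j k else 0)" for i l j k
    by (rule pd_function_of_coordinate[where S=UNIV and h="\<lambda>t. godel_christoffel m t l j k"])
      (simp_all add: godel_christoffel_has_derivative)
  have "exp (m * p$0) \<noteq> 0" by simp
  then have "\<forall>i j k l. Rc (godel_metric m) p i j k l = godel_curvature_coeff m (p$0) i j k l"
    unfolding Rc_def Gam_godel_metric pd_Gam sum_4_eq forall_4_eq
    apply (simp only: component_simps godel_christoffel_def godel_christoffel_deriv_def
        godel_curvature_coeff_def)
    by (simp add: field_simps power2_eq_square)
  then show ?thesis by blast
qed

lemma linear_godel_frame: "linear (godel_frame m t)"
proof (rule linearI)
  show "godel_frame m t (X + Y) = godel_frame m t X + godel_frame m t Y" for X Y
    unfolding vec4_eq_iff godel_frame_def by (simp add: algebra_simps)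
  show "godel_frame m t (c *\<^sub>R X) = c *\<^sub>R godel_frame m t X" for c X
    unfolding vec4_eq_iff godel_frame_def by (simp add: algebra_simps)
qed

lemma gv_godel_metric:
  "gv (godel_metric m) p X Y = godel_eta (godel_frame m (p$0) X) (godel_frame m (p$0) Y)"
  unfolding gv_def sum_4_eq godel_metric_eq_coeff godel_coeff_def godel_eta_def godel_frame_def
  by (simp add: field_simps power2_eq_square)

lemma Rop_godel_metric:
  "godel_frame m (p$0) (Rop (godel_metric m) p X Y Z)
     = godel_frame_curv (m^2/2) (godel_frame m (p$0) X) (godel_frame m (p$0) Y) (godel_frame m (p$0) Z)"
proof -
  have "exp (m * p$0) \<noteq> 0" by simp
  then show ?thesis
    unfolding vec4_eq_iff Rop_def Rc_godel_metric sum_4_eq godel_frame_def godel_frame_curv_def wd_def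
    by (simp only: component_simps godel_curvature_coeff_def) (simp add: field_simps power2_eq_square)
qed

lemma Ric_godel_metric:
  "Ric (godel_metric m) p X Y = godel_frame_ricci (m^2/2) (godel_frame m (p$0) X) (godel_frame m (p$0) Y)"
proof -
  have "exp (m * p$0) \<noteq> 0" by simp
  then show ?thesis
    unfolding Ric_def Rop_def Rc_godel_metric sum_4_eq godel_frame_def godel_frame_ricci_def
    by (simp only: component_simps godel_curvature_coeff_def) (simp add: field_simps power2_eq_square)
qed

lemma Ricop_godel_metric:
  "godel_frame m (p$0) (Ricop (godel_metric m) p X) = godel_frame_ricci_op (m^2/2) (godel_frame m (p$0) X)"
proof -
  have "exp (m * p$0) \<noteq> 0" by simp
  then show ?thesis
    unfolding vec4_eq_iff Ricop_def Ric_godel_metric ginv_godel_metric sum_4_eq godel_frame_def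
      godel_frame_ricci_def godel_frame_ricci_op_def godel_inverse_def
    by (simp only: component_simps) (simp add: field_simps power2_eq_square)
qed

lemma scal_godel_metric: "scal (godel_metric m) p = m^2"
proof -
  have "exp (m * p$0) \<noteq> 0" by simp
  then show ?thesis
    unfolding scal_def Ric_godel_metric ginv_godel_metric sum_4_eq godel_frame_def
      godel_frame_ricci_def godel_inverse_def
    by (simp only: component_simps) (simp add: field_simps power2_eq_square)
qed

lemma constant_frame_godel_metric:
  "constant_frame (godel_metric m) p (godel_frame m (p$0)) godel_eta (godel_frame_curv (m^2/2))
     (godel_frame_ricci_op (m^2/2)) (godel_frame_ricci (m^2/2)) (2 * (m^2/2))"
  by (rule constant_frame.intro) (simp_all add: linear_godel_frame gv_godel_metric Rop_godel_metric
      Ricop_godel_metric Ric_godel_metric scal_godel_metric)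

lemma Ric_godel_metric_basis: "Ric (godel_metric m) q (e j) (e k) = godel_ricci_coeff m (q$0) j k"
proof -
  have "\<forall>j k. Ric (godel_metric m) q (e j) (e k) = godel_ricci_coeff m (q$0) j k"
    unfolding Ric_godel_metric forall_4_eq godel_frame_ricci_def godel_frame_def godel_ricci_coeff_def
    by (simp only: component_simps) (simp add: field_simps power2_eq_square)
  then show ?thesis by blast
qed

lemma godel_ricci_coeff_has_derivative:
  "((\<lambda>t. godel_ricci_coeff m t j k) has_real_derivative godel_ricci_coeff_deriv m t j k) (at t)"
proof -
  have "\<forall>j k. ((\<lambda>t. godel_ricci_coeff m t j k) has_real_derivative godel_ricci_coeff_deriv m t j k) (at t)"
    unfolding forall_4_eq godel_ricci_coeff_def godel_ricci_coeff_deriv_def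
    by (simp only: component_simps)
      (auto intro!: derivative_eq_intros simp: power2_eq_square power3_eq_cube)
  then show ?thesis by blast
qed

lemma nablaRic_godel_metric:
  "nablaRic (godel_metric m) p X1 X2 X3 = (\<Sum>i\<in>UNIV. \<Sum>j\<in>UNIV. \<Sum>k\<in>UNIV. X1$i * X2$j * X3$k *
     ((if i = 0 then godel_ricci_coeff_deriv m (p$0) j k else 0)
      - (\<Sum>l\<in>UNIV. godel_christoffel m (p$0) l i j * godel_ricci_coeff m (p$0) l k)
      - (\<Sum>l\<in>UNIV. godel_christoffel m (p$0) l i k * godel_ricci_coeff m (p$0) j l)))"
proof -
  have pd_Ric: "pd i (\<lambda>q. godel_ricci_coeff m (q$0) j k) p
      = (if i = 0 then godel_ricci_coeff_deriv m (p$0) j k else 0)" for i j k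
    by (rule pd_function_of_coordinate[where S=UNIV and h="\<lambda>t. godel_ricci_coeff m t j k"])
      (simp_all add: godel_ricci_coeff_has_derivative)
  show ?thesis
    unfolding nablaRic_def Ric_godel_metric_basis Gam_godel_metric pd_Ric ..
qed

lemma godel_ricci_cyclic_parallel: "ricci_cyclic_parallel (godel_metric m) UNIV"
  unfolding ricci_cyclic_parallel_def
proof (intro ballI allI)
  fix p X1 X2 X3 :: pt
  have "exp (m * p$0) \<noteq> 0" by simp
  then show "nablaRic (godel_metric m) p X1 X2 X3 + nablaRic (godel_metric m) p X2 X3 X1
      + nablaRic (godel_metric m) p X3 X1 X2 = 0"
    unfolding nablaRic_godel_metric sum_4_eq
    by (simp only: component_simps godel_christoffel_def godel_ricci_coeff_def godel_ricci_coeff_deriv_def)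
      (simp add: field_simps power2_eq_square power3_eq_cube)
qed

lemma godel_not_ricci_codazzi:
  assumes "m \<noteq> 0"
  shows "\<not> ricci_codazzi (godel_metric m) UNIV"
proof
  assume "ricci_codazzi (godel_metric m) UNIV"
  then have "nablaRic (godel_metric m) 0 (e 0) (e 1) (e 1) = nablaRic (godel_metric m) 0 (e 1) (e 0) (e 1)"
    unfolding ricci_codazzi_def by blast
  moreover have "nablaRic (godel_metric m) 0 (e 0) (e 1) (e 1) = m^3"
    and "nablaRic (godel_metric m) 0 (e 1) (e 0) (e 1) = - (m^3 / 2)"
    unfolding nablaRic_godel_metric sum_4_eq
    by (simp_all only: component_simps godel_christoffel_def godel_ricci_coeff_def
        godel_ricci_coeff_deriv_def) (simp_all add: field_simps power2_eq_square power3_eq_cube)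
  ultimately have "m^3 = 0" by linarith
  then show False using assms by simp
qed

lemma godel_curvature_conditions:
  "ricci_gen_pseudosymmetric (godel_metric m) UNIV \<and> weyl_pseudosymmetric (godel_metric m) UNIV
    \<and> ricci_compatible Rt (godel_metric m) UNIV \<and> ricci_compatible Ct (godel_metric m) UNIV
    \<and> ricci_compatible Wt (godel_metric m) UNIV \<and> ricci_compatible Kt (godel_metric m) UNIV"
  by (rule curvature_conditions_via_frames[OF constant_frame_godel_metric
        godel_frame_RR godel_frame_CC godel_frame_compatible])

section \<open>The Som-Raychaudhuri spacetime\<close>

definition som_ray_coeff :: "real \<Rightarrow> real \<Rightarrow> 4 \<Rightarrow> 4 \<Rightarrow> real" where
  "som_ray_coeff a r i j = (if i = 0 \<and> j = 0 then 1
      else if (i = 0 \<and> j = 1) \<or> (i = 1 \<and> j = 0) then a * r^2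
      else if i = 1 \<and> j = 1 then a^2 * r^4 - r^2
      else if i = 2 \<and> j = 2 then -1
      else if i = 3 \<and> j = 3 then -1
      else 0)"

definition som_ray_coeff_deriv :: "real \<Rightarrow> real \<Rightarrow> 4 \<Rightarrow> 4 \<Rightarrow> real" where
  "som_ray_coeff_deriv a r i j = (if (i = 0 \<and> j = 1) \<or> (i = 1 \<and> j = 0) then 2 * a * r
      else if i = 1 \<and> j = 1 then 4 * a^2 * r^3 - 2 * r
      else 0)"

definition som_ray_inverse :: "real \<Rightarrow> real \<Rightarrow> real^4^4" where
  "som_ray_inverse a r = (\<chi> i j. if i = 0 \<and> j = 0 then 1 - a^2 * r^2
     else if (i = 0 \<and> j = 1) \<or> (i = 1 \<and> j = 0) then a
     else if i = 1 \<and> j = 1 then - 1 / r^2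
     else if i = 2 \<and> j = 2 then -1 else if i = 3 \<and> j = 3 then -1 else 0)"

definition som_ray_christoffel :: "real \<Rightarrow> real \<Rightarrow> 4 \<Rightarrow> 4 \<Rightarrow> 4 \<Rightarrow> real" where
  "som_ray_christoffel a r k i j = (if k = 0 \<and> ((i = 0 \<and> j = 2) \<or> (i = 2 \<and> j = 0)) then a^2 * r
     else if k = 0 \<and> ((i = 1 \<and> j = 2) \<or> (i = 2 \<and> j = 1)) then a^3 * r^3
     else if k = 1 \<and> ((i = 0 \<and> j = 2) \<or> (i = 2 \<and> j = 0)) then - a / r
     else if k = 1 \<and> ((i = 1 \<and> j = 2) \<or> (i = 2 \<and> j = 1)) then 1 / r - a^2 * r
     else if k = 2 \<and> ((i = 0 \<and> j = 1) \<or> (i = 1 \<and> j = 0)) then a * r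
     else if k = 2 \<and> i = 1 \<and> j = 1 then 2 * a^2 * r^3 - r
     else 0)"

definition som_ray_christoffel_deriv :: "real \<Rightarrow> real \<Rightarrow> 4 \<Rightarrow> 4 \<Rightarrow> 4 \<Rightarrow> real" where
  "som_ray_christoffel_deriv a r k i j = (if k = 0 \<and> ((i = 0 \<and> j = 2) \<or> (i = 2 \<and> j = 0)) then a^2
     else if k = 0 \<and> ((i = 1 \<and> j = 2) \<or> (i = 2 \<and> j = 1)) then 3 * a^3 * r^2
     else if k = 1 \<and> ((i = 0 \<and> j = 2) \<or> (i = 2 \<and> j = 0)) then a / r^2
     else if k = 1 \<and> ((i = 1 \<and> j = 2) \<or> (i = 2 \<and> j = 1)) then - 1 / r^2 - a^2
     else if k = 2 \<and> ((i = 0 \<and> j = 1) \<or> (i = 1 \<and> j = 0)) then a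
     else if k = 2 \<and> i = 1 \<and> j = 1 then 6 * a^2 * r^2 - 1
     else 0)"

definition som_ray_curvature_coeff :: "real \<Rightarrow> real \<Rightarrow> 4 \<Rightarrow> 4 \<Rightarrow> 4 \<Rightarrow> 4 \<Rightarrow> real" where
  "som_ray_curvature_coeff a r i j k l = (
     if i = 0 \<and> j = 1 \<and> k = 0 \<and> l = 0 then a^3 * r^2
     else if i = 0 \<and> j = 1 \<and> k = 0 \<and> l = 1 then - (a^2)
     else if i = 0 \<and> j = 1 \<and> k = 1 \<and> l = 0 then - (a^2 * r^2) + a^4 * r^4
     else if i = 0 \<and> j = 1 \<and> k = 1 \<and> l = 1 then - (a^3 * r^2)
     else if i = 0 \<and> j = 2 \<and> k = 0 \<and> l = 2 then - (a^2)
     else if i = 0 \<and> j = 2 \<and> k = 1 \<and> l = 2 then - (a^3 * r^2)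
     else if i = 0 \<and> j = 2 \<and> k = 2 \<and> l = 0 then - (a^2)
     else if i = 1 \<and> j = 0 \<and> k = 0 \<and> l = 0 then - (a^3 * r^2)
     else if i = 1 \<and> j = 0 \<and> k = 0 \<and> l = 1 then a^2
     else if i = 1 \<and> j = 0 \<and> k = 1 \<and> l = 0 then a^2 * r^2 - a^4 * r^4
     else if i = 1 \<and> j = 0 \<and> k = 1 \<and> l = 1 then a^3 * r^2
     else if i = 1 \<and> j = 2 \<and> k = 0 \<and> l = 2 then - (a^3 * r^2)
     else if i = 1 \<and> j = 2 \<and> k = 1 \<and> l = 2 then - (3 * a^2 * r^2) - a^4 * r^4
     else if i = 1 \<and> j = 2 \<and> k = 2 \<and> l = 0 then - (4 * a^3 * r^2)
     else if i = 1 \<and> j = 2 \<and> k = 2 \<and> l = 1 then 3 * a^2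
     else if i = 2 \<and> j = 0 \<and> k = 0 \<and> l = 2 then a^2
     else if i = 2 \<and> j = 0 \<and> k = 1 \<and> l = 2 then a^3 * r^2
     else if i = 2 \<and> j = 0 \<and> k = 2 \<and> l = 0 then a^2
     else if i = 2 \<and> j = 1 \<and> k = 0 \<and> l = 2 then a^3 * r^2
     else if i = 2 \<and> j = 1 \<and> k = 1 \<and> l = 2 then 3 * a^2 * r^2 + a^4 * r^4
     else if i = 2 \<and> j = 1 \<and> k = 2 \<and> l = 0 then 4 * a^3 * r^2
     else if i = 2 \<and> j = 1 \<and> k = 2 \<and> l = 1 then - (3 * a^2)
     else 0)"

definition som_ray_ricci_coeff :: "real \<Rightarrow> real \<Rightarrow> 4 \<Rightarrow> 4 \<Rightarrow> real" where
  "som_ray_ricci_coeff a r j k = (if j = 0 \<and> k = 0 then 2 * a^2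
     else if (j = 0 \<and> k = 1) \<or> (j = 1 \<and> k = 0) then 2 * a^3 * r^2
     else if j = 1 \<and> k = 1 then 2 * a^2 * r^2 + 2 * a^4 * r^4
     else if j = 2 \<and> k = 2 then 2 * a^2 else 0)"

definition som_ray_ricci_coeff_deriv :: "real \<Rightarrow> real \<Rightarrow> 4 \<Rightarrow> 4 \<Rightarrow> real" where
  "som_ray_ricci_coeff_deriv a r j k = (if (j = 0 \<and> k = 1) \<or> (j = 1 \<and> k = 0) then 4 * a^3 * r
     else if j = 1 \<and> k = 1 then 4 * a^2 * r + 8 * a^4 * r^3 else 0)"

lemmas som_ray_arith = field_simps power2_eq_square power3_eq_cube power4_eq_mult

lemma som_ray_metric_eq_coeff: "som_ray_metric a q i j = som_ray_coeff a (q$2) i j"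
  unfolding som_ray_metric_def som_ray_coeff_def by simp

lemma som_ray_coeff_has_derivative:
  "((\<lambda>r. som_ray_coeff a r i j) has_real_derivative som_ray_coeff_deriv a r i j) (at r)"
proof -
  have "\<forall>i j. ((\<lambda>r. som_ray_coeff a r i j) has_real_derivative som_ray_coeff_deriv a r i j) (at r)"
    unfolding forall_4_eq som_ray_coeff_def som_ray_coeff_deriv_def
    by (simp only: component_simps) (auto intro!: derivative_eq_intros simp: som_ray_arith)
  then show ?thesis by blast
qed

lemma pd_som_ray_metric:
  "pd k (\<lambda>q. som_ray_metric a q i j) p = (if k = 2 then som_ray_coeff_deriv a (p$2) i j else 0)"
  by (rule pd_function_of_coordinate[where S=UNIV and h="\<lambda>r. som_ray_coeff a r i j"])
    (simp_all add: som_ray_metric_eq_coeff som_ray_coeff_has_derivative)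

lemma ginv_som_ray_metric:
  assumes "q$2 \<noteq> 0"
  shows "ginv (som_ray_metric a) q = som_ray_inverse a (q$2)"
  unfolding ginv_def
proof (rule matrix_inv_eqI)
  show "(\<chi> i j. som_ray_metric a q i j) ** som_ray_inverse a (q$2) = mat 1"
    and "som_ray_inverse a (q$2) ** (\<chi> i j. som_ray_metric a q i j) = mat 1"
    unfolding matrix_matrix_mult_def mat_def vec_eq_iff forall_4_eq sum_4_eq som_ray_inverse_def
      som_ray_metric_eq_coeff som_ray_coeff_def
    using assms by (simp_all only: component_simps) (simp_all add: som_ray_arith)
qed

lemma Gam_som_ray_metric:
  assumes "q$2 \<noteq> 0"
  shows "Gam (som_ray_metric a) q k i j = som_ray_christoffel a (q$2) k i j"
proof -
  have "\<forall>k i j. Gam (som_ray_metric a) q k i j = som_ray_christoffel a (q$2) k i j"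
    unfolding Gam_def ginv_som_ray_metric[OF assms] pd_som_ray_metric sum_4_eq forall_4_eq
      som_ray_inverse_def som_ray_coeff_deriv_def som_ray_christoffel_def
    using assms by (simp only: component_simps) (simp add: som_ray_arith)
  then show ?thesis by blast
qed

lemma som_ray_christoffel_has_derivative:
  assumes "r \<noteq> 0"
  shows "((\<lambda>r. som_ray_christoffel a r k i j) has_real_derivative som_ray_christoffel_deriv a r k i j) (at r)"
proof -
  have "\<forall>k i j. ((\<lambda>r. som_ray_christoffel a r k i j) has_real_derivative som_ray_christoffel_deriv a r k i j) (at r)"
    unfolding forall_4_eq som_ray_christoffel_def som_ray_christoffel_deriv_def
    using assms by (simp only: component_simps) (auto intro!: derivative_eq_intros simp: som_ray_arith)
  then show ?thesis by blast
qed

lemma Rc_som_ray_metric: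
  assumes "p$2 > 0"
  shows "Rc (som_ray_metric a) p i j k l = som_ray_curvature_coeff a (p$2) i j k l"
proof -
  have p: "p$2 \<noteq> 0" using assms by simp
  have pd_Gam: "pd i (\<lambda>q. Gam (som_ray_metric a) q l j k) p
      = (if i = 2 then som_ray_christoffel_deriv a (p$2) l j k else 0)" for i l j k
    by (rule pd_function_of_coordinate[where S="{0<..}" and h="\<lambda>r. som_ray_christoffel a r l j k"])
      (use assms in \<open>simp_all add: Gam_som_ray_metric som_ray_christoffel_has_derivative\<close>)
  have "\<forall>i j k l. Rc (som_ray_metric a) p i j k l = som_ray_curvature_coeff a (p$2) i j k l"
    unfolding Rc_def pd_Gam Gam_som_ray_metric[OF p] sum_4_eq forall_4_eq
    apply (simp only: component_simps som_ray_christoffel_def som_ray_christoffel_deriv_def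
        som_ray_curvature_coeff_def)
    using p by (simp add: som_ray_arith)
  then show ?thesis by blast
qed

lemma linear_som_ray_frame: "linear (som_ray_frame a r)"
proof (rule linearI)
  show "som_ray_frame a r (X + Y) = som_ray_frame a r X + som_ray_frame a r Y" for X Y
    unfolding vec4_eq_iff som_ray_frame_def by (simp add: algebra_simps)
  show "som_ray_frame a r (c *\<^sub>R X) = c *\<^sub>R som_ray_frame a r X" for c X
    unfolding vec4_eq_iff som_ray_frame_def by (simp add: algebra_simps)
qed

lemma gv_som_ray_metric:
  "gv (som_ray_metric a) p X Y = som_ray_eta (som_ray_frame a (p$2) X) (som_ray_frame a (p$2) Y)"
  unfolding gv_def sum_4_eq som_ray_metric_eq_coeff som_ray_coeff_def som_ray_eta_def som_ray_frame_def
  by (simp only: component_simps) (simp add: som_ray_arith)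

lemma Rop_som_ray_metric:
  assumes "p$2 > 0"
  shows "som_ray_frame a (p$2) (Rop (som_ray_metric a) p X Y Z)
     = som_ray_frame_curv a (som_ray_frame a (p$2) X) (som_ray_frame a (p$2) Y) (som_ray_frame a (p$2) Z)"
  unfolding vec4_eq_iff Rop_def Rc_som_ray_metric[OF assms] sum_4_eq som_ray_frame_def
    som_ray_frame_curv_def som_ray_frame_riemann_def wd_def
  by (simp only: component_simps som_ray_curvature_coeff_def axis_def) (simp add: som_ray_arith)

lemma Ric_som_ray_metric:
  assumes "p$2 > 0"
  shows "Ric (som_ray_metric a) p X Y = som_ray_frame_ricci a (som_ray_frame a (p$2) X) (som_ray_frame a (p$2) Y)"
  unfolding Ric_def Rop_def Rc_som_ray_metric[OF assms] sum_4_eq som_ray_frame_def som_ray_frame_ricci_def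
  by (simp only: component_simps som_ray_curvature_coeff_def) (simp add: som_ray_arith)

lemma Ricop_som_ray_metric:
  assumes "p$2 > 0"
  shows "som_ray_frame a (p$2) (Ricop (som_ray_metric a) p X) = som_ray_frame_ricci_op a (som_ray_frame a (p$2) X)"
proof -
  have p: "p$2 \<noteq> 0" using assms by simp
  then show ?thesis
    unfolding vec4_eq_iff Ricop_def Ric_som_ray_metric[OF assms] ginv_som_ray_metric[OF p] sum_4_eq
      som_ray_frame_def som_ray_frame_ricci_def som_ray_frame_ricci_op_def som_ray_inverse_def
    by (simp only: component_simps) (simp add: som_ray_arith)
qed

lemma scal_som_ray_metric:
  assumes "p$2 > 0"
  shows "scal (som_ray_metric a) p = -2 * a^2"
proof -
  have p: "p$2 \<noteq> 0" using assms by simp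
  then show ?thesis
    unfolding scal_def Ric_som_ray_metric[OF assms] ginv_som_ray_metric[OF p] sum_4_eq
      som_ray_frame_def som_ray_frame_ricci_def som_ray_inverse_def
    by (simp only: component_simps) (simp add: som_ray_arith)
qed

lemma constant_frame_som_ray_metric:
  assumes "p$2 > 0"
  shows "constant_frame (som_ray_metric a) p (som_ray_frame a (p$2)) som_ray_eta (som_ray_frame_curv a)
     (som_ray_frame_ricci_op a) (som_ray_frame_ricci a) (-2 * a^2)"
  by (rule constant_frame.intro) (simp_all add: assms linear_som_ray_frame gv_som_ray_metric
      Rop_som_ray_metric Ricop_som_ray_metric Ric_som_ray_metric scal_som_ray_metric)

lemma Ric_som_ray_metric_basis:
  assumes "q$2 > 0"
  shows "Ric (som_ray_metric a) q (e j) (e k) = som_ray_ricci_coeff a (q$2) j k"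
proof -
  have "\<forall>j k. Ric (som_ray_metric a) q (e j) (e k) = som_ray_ricci_coeff a (q$2) j k"
    unfolding Ric_som_ray_metric[OF assms] forall_4_eq som_ray_frame_ricci_def som_ray_frame_def
      som_ray_ricci_coeff_def
    by (simp only: component_simps) (simp add: som_ray_arith)
  then show ?thesis by blast
qed

lemma som_ray_ricci_coeff_has_derivative:
  "((\<lambda>r. som_ray_ricci_coeff a r j k) has_real_derivative som_ray_ricci_coeff_deriv a r j k) (at r)"
proof -
  have "\<forall>j k. ((\<lambda>r. som_ray_ricci_coeff a r j k) has_real_derivative som_ray_ricci_coeff_deriv a r j k) (at r)"
    unfolding forall_4_eq som_ray_ricci_coeff_def som_ray_ricci_coeff_deriv_def
    by (simp only: component_simps) (auto intro!: derivative_eq_intros simp: som_ray_arith)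
  then show ?thesis by blast
qed

lemma nablaRic_som_ray_metric:
  assumes "p$2 > 0"
  shows "nablaRic (som_ray_metric a) p X1 X2 X3 = (\<Sum>i\<in>UNIV. \<Sum>j\<in>UNIV. \<Sum>k\<in>UNIV. X1$i * X2$j * X3$k *
     ((if i = 2 then som_ray_ricci_coeff_deriv a (p$2) j k else 0)
      - (\<Sum>l\<in>UNIV. som_ray_christoffel a (p$2) l i j * som_ray_ricci_coeff a (p$2) l k)
      - (\<Sum>l\<in>UNIV. som_ray_christoffel a (p$2) l i k * som_ray_ricci_coeff a (p$2) j l)))"
proof -
  have p: "p$2 \<noteq> 0" using assms by simp
  have pd_Ric: "pd i (\<lambda>q. Ric (som_ray_metric a) q (e j) (e k)) p
      = (if i = 2 then som_ray_ricci_coeff_deriv a (p$2) j k else 0)" for i j k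
    by (rule pd_function_of_coordinate[where S="{0<..}" and h="\<lambda>r. som_ray_ricci_coeff a r j k"])
      (use assms in \<open>simp_all add: Ric_som_ray_metric_basis som_ray_ricci_coeff_has_derivative\<close>)
  show ?thesis
    unfolding nablaRic_def pd_Ric Ric_som_ray_metric_basis[OF assms] Gam_som_ray_metric[OF p] ..
qed

lemma som_ray_ricci_cyclic_parallel: "ricci_cyclic_parallel (som_ray_metric a) {p. p$2 > 0}"
  unfolding ricci_cyclic_parallel_def
proof (intro ballI allI)
  fix p X1 X2 X3 :: pt
  assume "p \<in> {p. p$2 > 0}"
  then have p: "p$2 > 0" by simp
  then show "nablaRic (som_ray_metric a) p X1 X2 X3 + nablaRic (som_ray_metric a) p X2 X3 X1
      + nablaRic (som_ray_metric a) p X3 X1 X2 = 0"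
    unfolding nablaRic_som_ray_metric[OF p] sum_4_eq
    by (simp only: component_simps som_ray_christoffel_def som_ray_ricci_coeff_def
        som_ray_ricci_coeff_deriv_def) (simp add: som_ray_arith)
qed

lemma som_ray_not_ricci_codazzi:
  assumes "a \<noteq> 0"
  shows "\<not> ricci_codazzi (som_ray_metric a) {p. p$2 > 0}"
proof
  have p: "e 2 $ 2 > 0" by (simp add: e_nth)
  assume "ricci_codazzi (som_ray_metric a) {p. p$2 > 0}"
  then have "nablaRic (som_ray_metric a) (e 2) (e 1) (e 0) (e 2) = nablaRic (som_ray_metric a) (e 2) (e 0) (e 1) (e 2)"
    unfolding ricci_codazzi_def using p by blast
  moreover have "nablaRic (som_ray_metric a) (e 2) (e 1) (e 0) (e 2) = - 4 * a^3"
    and "nablaRic (som_ray_metric a) (e 2) (e 0) (e 1) (e 2) = 0"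
    unfolding nablaRic_som_ray_metric[OF p] sum_4_eq
    by (simp_all only: component_simps som_ray_christoffel_def som_ray_ricci_coeff_def
        som_ray_ricci_coeff_deriv_def) (simp_all add: som_ray_arith)
  ultimately show False using assms by simp
qed

lemma som_ray_curvature_conditions:
  "ricci_gen_pseudosymmetric (som_ray_metric a) {p. p$2 > 0} \<and> weyl_pseudosymmetric (som_ray_metric a) {p. p$2 > 0}
    \<and> ricci_compatible Rt (som_ray_metric a) {p. p$2 > 0} \<and> ricci_compatible Ct (som_ray_metric a) {p. p$2 > 0}
    \<and> ricci_compatible Wt (som_ray_metric a) {p. p$2 > 0} \<and> ricci_compatible Kt (som_ray_metric a) {p. p$2 > 0}"
  by (rule curvature_conditions_via_frames[OF constant_frame_som_ray_metric
        som_ray_frame_RR som_ray_frame_CC som_ray_frame_compatible]) simp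

theorem mainTheorem3:
  fixes a m :: real
  assumes "a \<noteq> 0" and "m \<noteq> 0"
  shows "(let g = godel_metric m; U = (UNIV :: pt set) in
            ricci_gen_pseudosymmetric g U \<and> weyl_pseudosymmetric g U
          \<and> ricci_compatible Rt g U \<and> ricci_compatible Ct g U
          \<and> ricci_compatible Wt g U \<and> ricci_compatible Kt g U
          \<and> ricci_cyclic_parallel g U \<and> \<not> ricci_codazzi g U)
       \<and> (let g = som_ray_metric a; U = {p :: pt. p$2 > 0} in
            ricci_gen_pseudosymmetric g U \<and> weyl_pseudosymmetric g U
          \<and> ricci_compatible Rt g U \<and> ricci_compatible Ct g U
          \<and> ricci_compatible Wt g U \<and> ricci_compatible Kt g U
          \<and> ricci_cyclic_parallel g U \<and> \<not> ricci_codazzi g U)"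
  unfolding Let_def
  using godel_curvature_conditions godel_ricci_cyclic_parallel godel_not_ricci_codazzi[OF assms(2)]
    som_ray_curvature_conditions som_ray_ricci_cyclic_parallel som_ray_not_ricci_codazzi[OF assms(1)]
  by blast

end
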